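(* There exist binary-input discrete memoryless channels $W$ and $V$ with a common finite output alphabet, both symmetrized by the same involutive permutation of the output alphabet, such that $$C_P(W,V) > C(W,V).$$
   Context: A binary-input discrete memoryless channel (B-DMC) $W:\{0,1\}\to\mathcal{Y}$ is given by transition probabilities $W(y|x)$. $W$ and $V$ are symmetrized by the same permutation if there is a permutation $\pi$ of $\mathcal{Y}$ with $\pi=\pi^{-1}$ and $W(y|0)=W(\pi(y)|1)$, $V(y|0)=V(\pi(y)|1)$ for all $y$. Mismatched capacity $C(W,V)$: the supremum of rates $R$ such that for every $\epsilon>0$ and all sufficiently large $n$ there is a codebook $\{\mathbf{x}(1),\dots,\mathbf{x}(M)\}\subset\{0,1\}^n$ with $\frac{\log M}{n}>R$ and maximal error probability less than $\epsilon$ over the memoryless channel $W$, when decoded by outputting the unique $i$ with $\prod_k V(y_k|x_k(i))>\prod_k V(y_k|x_k(j))$ for all $j\neq i$ (erasure/error if no such $i$). Polar transforms: $W^-(y_1y_2|u_1)=\sum_{u_2\in\mathbb{F}_2}\tfrac12 W(y_1|u_1\oplus u_2)W(y_2|u_2)$, $W^+(y_1y_2u_1|u_2)=\tfrac12 W(y_1|u_1\oplus u_2)W(y_2|u_2)$; iterating, for $N=2^n$ one obtains synthetic channels $W_N^{(i)}$, $i=1,\dots,N$ (the channels $W^{s}$, $s\in\{+,-\}^n$, in Arıkan's ordering), and similarly $V_N^{(i)}$ from $V$. Polar mismatched capacity $C_P(W,V)$: a polar code of blocklength $N=2^n$ uses Arıkan's polar encoder with an information set $\mathcal{A}\subseteq\{1,\dots,N\}$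 carrying data and the remaining inputs frozen to known values; the transmitted word is sent over $N$ independent uses of $W$. The mismatched successive cancellation decoder designed for $V$ decodes $\hat u_i=u_i$ for $i\notin\mathcal{A}$ and, for $i\in\mathcal{A}$, $\hat u_i=f^{(i)}(y_1^N,\hat u_1^{i-1})$ where $f^{(i)}$ is the maximum-likelihood decision rule for the synthetic channel $V_N^{(i)}$ (rather than $W_N^{(i)}$). $C_P(W,V)$ is the supremum of rates $|\mathcal{A}|/N$ achievable by such polar codes with block error probability tending to $0$ as $N\to\infty$. *)

theory Defs
  imports Complex_Main
begin

text \<open>Output alphabet: a finite set Y of natural numbers (any finite alphabet can be
  relabelled into nat).  Input 0 is False, input 1 is True.
  A channel is W :: bool => nat => real, W x y = W(y|x).\<close>

definition bdmc :: "nat set \<Rightarrow> (bool \<Rightarrow> nat \<Rightarrow> real) \<Rightarrow> bool" where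
  "bdmc Y W \<longleftrightarrow> finite Y \<and> (\<forall>x y. 0 \<le> W x y) \<and> (\<forall>x y. y \<notin> Y \<longrightarrow> W x y = 0)
      \<and> (\<forall>x. (\<Sum>y\<in>Y. W x y) = 1)"

definition same_symmetrized :: "nat set \<Rightarrow> (bool \<Rightarrow> nat \<Rightarrow> real) \<Rightarrow> (bool \<Rightarrow> nat \<Rightarrow> real) \<Rightarrow> bool" where
  "same_symmetrized Y W V \<longleftrightarrow> (\<exists>\<pi> :: nat \<Rightarrow> nat.
      (\<forall>y\<in>Y. \<pi> y \<in> Y \<and> \<pi> (\<pi> y) = y) \<and>
      (\<forall>y\<in>Y. W False y = W True (\<pi> y) \<and> V False y = V True (\<pi> y)))"

definition out_seqs :: "nat set \<Rightarrow> nat \<Rightarrow> nat list set" where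
  "out_seqs Y n = {ys. set ys \<subseteq> Y \<and> length ys = n}"

definition bin_words :: "nat \<Rightarrow> bool list set" where
  "bin_words n = {bs. length bs = n}"

definition chanN :: "(bool \<Rightarrow> nat \<Rightarrow> real) \<Rightarrow> bool list \<Rightarrow> nat list \<Rightarrow> real" where
  "chanN W xs ys = (\<Prod>k<length xs. W (xs ! k) (ys ! k))"

definition mm_err :: "nat set \<Rightarrow> (bool \<Rightarrow> nat \<Rightarrow> real) \<Rightarrow> (bool \<Rightarrow> nat \<Rightarrow> real) \<Rightarrow> nat
     \<Rightarrow> nat \<Rightarrow> (nat \<Rightarrow> bool list) \<Rightarrow> nat \<Rightarrow> real" where
  "mm_err Y W V n M c i = (\<Sum>ys\<in>out_seqs Y n. chanN W (c i) ys *
      (if (\<forall>j<M. j \<noteq> i \<longrightarrow> chanN V (c j) ys < chanN V (c i) ys) then 0 else 1))"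

definition mm_achievable :: "nat set \<Rightarrow> (bool \<Rightarrow> nat \<Rightarrow> real) \<Rightarrow> (bool \<Rightarrow> nat \<Rightarrow> real) \<Rightarrow> real \<Rightarrow> bool" where
  "mm_achievable Y W V R \<longleftrightarrow> (\<forall>\<epsilon>>0. \<forall>\<^sub>F n in sequentially.
      \<exists>(M::nat) (c :: nat \<Rightarrow> bool list). 0 < M \<and> (\<forall>i<M. length (c i) = n) \<and>
        log 2 (real M) / real n > R \<and> (\<forall>i<M. mm_err Y W V n M c i < \<epsilon>))"

definition mm_capacity :: "nat set \<Rightarrow> (bool \<Rightarrow> nat \<Rightarrow> real) \<Rightarrow> (bool \<Rightarrow> nat \<Rightarrow> real) \<Rightarrow> real" where
  "mm_capacity Y W V = Sup {R. mm_achievable Y W V R}"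

text \<open>Polar encoder x = u F^{\<otimes>n} with F = [[1,0],[1,1]] (0-indexed):
  x_j = XOR of u_i over i with (i AND j) = j.  (Arikan's bit-reversal B_N only
  permutes the transmitted positions.)\<close>
definition polar_enc :: "bool list \<Rightarrow> bool list" where
  "polar_enc u = map (\<lambda>j. odd (card {i. i < length u \<and> u ! i \<and> and i j = j})) [0..<length u]"

text \<open>Synthetic channel W_N^{(i+1)}(y, p | b) for N = 2^n, where p = u_1^{i}.\<close>
definition synth :: "(bool \<Rightarrow> nat \<Rightarrow> real) \<Rightarrow> nat \<Rightarrow> nat \<Rightarrow> nat list \<Rightarrow> bool list \<Rightarrow> bool \<Rightarrow> real" where
  "synth W n i ys p b = (\<Sum>r\<in>bin_words (2^n - i - 1).
      chanN W (polar_enc (p @ [b] @ r)) ys / 2 ^ (2^n - 1))"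

text \<open>Successive cancellation decoder designed for V: first k decisions (0-indexed
  positions).  ML rule for V_N^{(i)} with ties decided as 0 (Arikan's convention).\<close>
fun sc_dec :: "(bool \<Rightarrow> nat \<Rightarrow> real) \<Rightarrow> nat \<Rightarrow> nat set \<Rightarrow> (nat \<Rightarrow> bool) \<Rightarrow> nat list \<Rightarrow> nat \<Rightarrow> bool list" where
  "sc_dec V n A fz ys 0 = []"
| "sc_dec V n A fz ys (Suc i) = (let p = sc_dec V n A fz ys i in
     p @ [if i \<in> A then synth V n i ys p False < synth V n i ys p True else fz i])"

definition polar_inputs :: "nat \<Rightarrow> nat set \<Rightarrow> (nat \<Rightarrow> bool) \<Rightarrow> bool list set" where
  "polar_inputs n A fz = {u. length u = 2^n \<and> (\<forall>i<2^n. i \<notin> A \<longrightarrow> u ! i = fz i)}"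

definition polar_block_err :: "nat set \<Rightarrow> (bool \<Rightarrow> nat \<Rightarrow> real) \<Rightarrow> (bool \<Rightarrow> nat \<Rightarrow> real)
     \<Rightarrow> nat \<Rightarrow> nat set \<Rightarrow> (nat \<Rightarrow> bool) \<Rightarrow> real" where
  "polar_block_err Y W V n A fz =
     (\<Sum>u\<in>polar_inputs n A fz. \<Sum>ys\<in>out_seqs Y (2^n).
        chanN W (polar_enc u) ys * (if sc_dec V n A fz ys (2^n) = u then 0 else 1))
     / real (card (polar_inputs n A fz))"

definition polar_achievable :: "nat set \<Rightarrow> (bool \<Rightarrow> nat \<Rightarrow> real) \<Rightarrow> (bool \<Rightarrow> nat \<Rightarrow> real) \<Rightarrow> real \<Rightarrow> bool" where
  "polar_achievable Y W V R \<longleftrightarrow> (\<exists>(A :: nat \<Rightarrow> nat set) (fz :: nat \<Rightarrow> nat \<Rightarrow> bool).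
      (\<forall>n. A n \<subseteq> {..<2^n}) \<and>
      (\<forall>\<^sub>F n in sequentially. R \<le> real (card (A n)) / 2 ^ n) \<and>
      ((\<lambda>n. polar_block_err Y W V n (A n) (fz n)) \<longlonglongrightarrow> 0))"

definition polar_mm_capacity :: "nat set \<Rightarrow> (bool \<Rightarrow> nat \<Rightarrow> real) \<Rightarrow> (bool \<Rightarrow> nat \<Rightarrow> real) \<Rightarrow> real" where
  "polar_mm_capacity Y W V = Sup {R. polar_achievable Y W V R}"

end

(*
  Take W noiseless and V inverting (binary symmetric channels with crossover 0 and 1); both are
  symmetrized by swapping the two outputs. On the output of W the mismatched ML decoder for V gives
  the transmitted codeword likelihood 0, so every code with at least two codewords fails with
  certainty and no positive rate is achievable. Successive cancellation decoding for V, however,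
  succeeds once the last input bit is frozen: the last row of the polar transform is all ones, so
  under V the output is explained exactly by the true input with its last bit flipped, which agrees
  with the true input on every information position. This gives error-free polar codes of rate
  1 - 2^-n.
*)

theory Submission
  imports Defs
begin

lemma and_mask_self:
  assumes "j < 2 ^ n"
  shows "and (2 ^ n - 1) j = (j :: nat)"
  by (metis assms and.commute mask_eq_exp_minus_1 take_bit_eq_mask take_bit_nat_eq_self_iff)

lemma and_eq_imp_le: "and i m = m \<Longrightarrow> m \<le> (i :: nat)"
  by (metis AND_upper1 of_nat_0_le_iff of_nat_and_eq of_nat_le_iff)

lemma polar_enc_length [simp]: "length (polar_enc u) = length u"
  by (simp add: polar_enc_def)

lemma polar_enc_nth:
  "j < length u \<Longrightarrow> polar_enc u ! j = odd (card {i. i < length u \<and> u ! i \<and> and i j = j})"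
  by (simp add: polar_enc_def)

lemma polar_enc_nth_cong:
  assumes "length v = length w" and "j < length v"
    and "\<And>i. i < length v \<Longrightarrow> and i j = j \<Longrightarrow> v ! i = w ! i"
  shows "polar_enc v ! j = polar_enc w ! j"
proof -
  have "{i. i < length v \<and> v ! i \<and> and i j = j} = {i. i < length w \<and> w ! i \<and> and i j = j}"
    using assms by auto
  then show ?thesis
    using assms by (simp add: polar_enc_nth)
qed

text \<open>The encoder is linear over \<open>GF(2)\<close>: input bit \<open>m\<close> enters output \<open>j\<close> iff \<open>j \<subseteq> m\<close> bitwise.\<close>

lemma polar_enc_nth_update:
  assumes m: "m < length u" and j: "j < length u" and jm: "and m j = j"
  shows "polar_enc (u[m := b]) ! j = (polar_enc u ! j \<noteq> (u ! m \<noteq> b))"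
proof -
  define T where "T = {i. i < length u \<and> i \<noteq> m \<and> u ! i \<and> and i j = j}"
  have "finite T" and "m \<notin> T"
    by (simp_all add: T_def)
  then have parity: "odd (card (T \<union> (if c then {m} else {}))) = (odd (card T) \<noteq> c)" for c
    by simp
  have "{i. i < length u \<and> u ! i \<and> and i j = j} = T \<union> (if u ! m then {m} else {})"
    using m jm by (auto simp: T_def)
  moreover have "{i. i < length u \<and> u[m := b] ! i \<and> and i j = j} = T \<union> (if b then {m} else {})"
    using m jm by (auto simp: T_def nth_list_update)
  ultimately show ?thesis
    using j parity[of b] parity[of "u ! m"] by (simp add: polar_enc_nth) (cases b; cases "u ! m"; simp)
qed

lemma polar_enc_inj:
  assumes len: "length v = length w" and eq: "polar_enc v = polar_enc w"
  shows "v = w"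
proof (rule ccontr)
  assume "v \<noteq> w"
  define D where "D = {i. i < length v \<and> v ! i \<noteq> w ! i}"
  have "D \<noteq> {}"
    using \<open>v \<noteq> w\<close> len by (auto simp: D_def intro: nth_equalityI)
  moreover have "finite D"
    by (simp add: D_def)
  ultimately have mD: "Max D \<in> D" and above: "\<And>i. i \<in> D \<Longrightarrow> i \<le> Max D"
    by simp_all
  define m where "m = Max D"
  have m: "m < length v" "v ! m \<noteq> w ! m"
    using mD by (simp_all add: D_def m_def)
  have agree: "v ! i = w ! i" if "m < i" and "i < length v" for i
  proof (rule ccontr)
    assume "v ! i \<noteq> w ! i"
    with that have "i \<le> m"
      unfolding m_def by (intro above) (simp add: D_def)
    with \<open>m < i\<close> show False
      by simp
  qed
  \<comment> \<open>\<open>w[m := v ! m]\<close> agrees with \<open>v\<close> in every position \<open>i \<supseteq> m\<close>, because these satisfy \<open>i \<ge> m\<close>.\<close>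
  have "polar_enc (w[m := v ! m]) ! m = polar_enc v ! m"
  proof (rule polar_enc_nth_cong)
    fix i assume i: "i < length (w[m := v ! m])" and "and i m = m"
    then have "m \<le> i"
      by (simp add: and_eq_imp_le)
    then show "w[m := v ! m] ! i = v ! i"
      using i len agree[of i] by (cases "i = m") auto
  qed (use len m in simp_all)
  moreover have "polar_enc (w[m := v ! m]) ! m = (polar_enc w ! m \<noteq> (w ! m \<noteq> v ! m))"
    using m len by (intro polar_enc_nth_update) simp_all
  ultimately show False
    using eq m(2) by simp
qed

text \<open>The last row of \<open>F\<^sup>\<otimes>\<^sup>n\<close> is all ones.\<close>

lemma polar_enc_flip_last:
  assumes "length u = 2 ^ n"
  shows "polar_enc (u[2 ^ n - 1 := \<not> u ! (2 ^ n - 1)]) = map Not (polar_enc u)"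
proof (rule nth_equalityI)
  fix j assume "j < length (polar_enc (u[2 ^ n - 1 := \<not> u ! (2 ^ n - 1)]))"
  with assms show "polar_enc (u[2 ^ n - 1 := \<not> u ! (2 ^ n - 1)]) ! j = map Not (polar_enc u) ! j"
    using polar_enc_nth_update[of "2 ^ n - 1" u j] and_mask_self[of j n] by simp
qed (simp add: assms)

lemma polar_enc_eq_complement_iff:
  assumes "length x = 2 ^ n" and "length u = 2 ^ n"
  shows "polar_enc x = map Not (polar_enc u) \<longleftrightarrow> x = u[2 ^ n - 1 := \<not> u ! (2 ^ n - 1)]"
  using assms polar_enc_inj polar_enc_flip_last[of u n] by (metis length_list_update)

definition bsc :: "real \<Rightarrow> bool \<Rightarrow> nat \<Rightarrow> real" where
  "bsc p x y = (if y = of_bool x then 1 - p else if y = of_bool (\<not> x) then p else 0)"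

lemma bdmc_bsc:
  assumes "0 \<le> p" and "p \<le> 1"
  shows "bdmc {0, 1} (bsc p)"
  using assms by (auto simp: bdmc_def bsc_def)

lemma same_symmetrized_bsc: "same_symmetrized {0, 1} (bsc p) (bsc q)"
  unfolding same_symmetrized_def by (rule exI[of _ "\<lambda>y. 1 - y"]) (auto simp: bsc_def)

lemma bsc_nonneg: "0 \<le> p \<Longrightarrow> p \<le> 1 \<Longrightarrow> 0 \<le> bsc p x y"
  by (simp add: bsc_def)

lemma chanN_nonneg: "(\<And>x y. 0 \<le> W x y) \<Longrightarrow> 0 \<le> chanN W xs ys"
  by (simp add: chanN_def prod_nonneg)

lemma bsc_one: "bsc 1 x y = bsc 0 (\<not> x) y"
  by (cases x) (auto simp: bsc_def)

lemma chanN_bsc_one: "chanN (bsc 1) xs ys = chanN (bsc 0) (map Not xs) ys"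
  by (simp add: chanN_def bsc_one)

lemma chanN_bsc_zero:
  assumes "length ys = length xs"
  shows "chanN (bsc 0) xs ys = of_bool (ys = map of_bool xs)"
proof (cases "ys = map of_bool xs")
  case True
  then show ?thesis
    by (simp add: chanN_def bsc_def)
next
  case False
  then obtain k where "k < length xs" and "ys ! k \<noteq> of_bool (xs ! k)"
    using assms by (auto simp: list_eq_iff_nth_eq)
  then have "chanN (bsc 0) xs ys = 0"
    unfolding chanN_def by (intro prod_zero bexI[of _ k]) (simp_all add: bsc_def)
  with False show ?thesis
    by simp
qed

lemma finite_bin_words: "finite (bin_words n)"
  using finite_lists_length_eq[of "UNIV :: bool set" n] by (simp add: bin_words_def)

lemma chanN_bsc_one_polar_enc:
  assumes "length x = 2 ^ n" and "length u = 2 ^ n"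
  shows "chanN (bsc 1) (polar_enc x) (map of_bool (polar_enc u))
    = of_bool (x = u[2 ^ n - 1 := \<not> u ! (2 ^ n - 1)])"
proof -
  have "inj (of_bool :: bool \<Rightarrow> nat)"
    by (rule injI) (simp add: of_bool_def split: if_splits)
  then have "map of_bool (polar_enc u) = map (of_bool :: bool \<Rightarrow> nat) (map Not (polar_enc x))
      \<longleftrightarrow> polar_enc u = map Not (polar_enc x)"
    by (rule inj_map_eq_map)
  also have "\<dots> \<longleftrightarrow> polar_enc x = map Not (polar_enc u)"
    by (auto simp: comp_def map_idI)
  finally have "map of_bool (polar_enc u) = map (of_bool :: bool \<Rightarrow> nat) (map Not (polar_enc x))
      \<longleftrightarrow> polar_enc x = map Not (polar_enc u)" .
  then show ?thesis
    using assms by (simp add: chanN_bsc_one chanN_bsc_zero polar_enc_eq_complement_iff)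
qed

text \<open>Decoding with \<open>V = bsc 1\<close> pretends every output bit is flipped; since flipping the frozen
  last input bit flips all output bits, this explanation is consistent with the true past.\<close>

lemma synth_bsc_one_polar_enc:
  assumes lu: "length u = 2 ^ n" and k: "k < 2 ^ n - 1"
  shows "synth (bsc 1) n k (map of_bool (polar_enc u)) (take k u) b
    = of_bool (b = u ! k) / 2 ^ (2 ^ n - 1)"
proof -
  define u' where "u' = u[2 ^ n - 1 := \<not> u ! (2 ^ n - 1)]"
  define r0 where "r0 = drop (Suc k) u'"
  have u': "u' = take k u @ [u ! k] @ r0"
    using id_take_nth_drop[of k u'] k lu by (simp add: u'_def r0_def)
  have r0: "r0 \<in> bin_words (2 ^ n - k - 1)"
    using lu by (simp add: r0_def u'_def bin_words_def)
  have "synth (bsc 1) n k (map of_bool (polar_enc u)) (take k u) b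
      = (\<Sum>r\<in>bin_words (2 ^ n - k - 1). if r = r0 then of_bool (b = u ! k) / 2 ^ (2 ^ n - 1) else 0)"
    unfolding synth_def
  proof (rule sum.cong[OF refl])
    fix r assume "r \<in> bin_words (2 ^ n - k - 1)"
    then have "length (take k u @ [b] @ r) = 2 ^ n"
      using k lu by (simp add: bin_words_def)
    then have "chanN (bsc 1) (polar_enc (take k u @ [b] @ r)) (map of_bool (polar_enc u))
        = of_bool (take k u @ [b] @ r = u')"
      unfolding u'_def using lu by (rule chanN_bsc_one_polar_enc)
    then show "chanN (bsc 1) (polar_enc (take k u @ [b] @ r)) (map of_bool (polar_enc u)) / 2 ^ (2 ^ n - 1)
        = (if r = r0 then of_bool (b = u ! k) / 2 ^ (2 ^ n - 1) else 0)"
      by (simp add: u')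
  qed
  also have "\<dots> = of_bool (b = u ! k) / 2 ^ (2 ^ n - 1)"
    using r0 by (simp add: finite_bin_words)
  finally show ?thesis .
qed

lemma sc_dec_eq_take:
  assumes lu: "length u = 2 ^ n"
    and info: "\<And>k. k < 2 ^ n \<Longrightarrow> k \<in> A \<Longrightarrow>
      (synth V n k ys (take k u) False < synth V n k ys (take k u) True) = u ! k"
    and frozen: "\<And>k. k < 2 ^ n \<Longrightarrow> k \<notin> A \<Longrightarrow> fz k = u ! k"
  shows "k \<le> 2 ^ n \<Longrightarrow> sc_dec V n A fz ys k = take k u"
proof (induction k)
  case 0
  then show ?case by simp
next
  case (Suc k)
  then have "k < 2 ^ n" by simp
  with Suc info frozen lu show ?case
    by (simp add: Let_def take_Suc_conv_app_nth)
qed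

lemma polar_block_err_eq_0:
  assumes "\<And>u ys. u \<in> polar_inputs n A fz \<Longrightarrow> ys \<in> out_seqs Y (2 ^ n) \<Longrightarrow>
      chanN W (polar_enc u) ys \<noteq> 0 \<Longrightarrow> sc_dec V n A fz ys (2 ^ n) = u"
  shows "polar_block_err Y W V n A fz = 0"
proof -
  have "chanN W (polar_enc u) ys * (if sc_dec V n A fz ys (2 ^ n) = u then 0 else 1) = 0"
    if "u \<in> polar_inputs n A fz" and "ys \<in> out_seqs Y (2 ^ n)" for u ys
    using assms[OF that] by fastforce
  then show ?thesis
    unfolding polar_block_err_def by (simp add: sum.neutral)
qed

lemma polar_block_err_bsc_zero_one:
  "polar_block_err {0, 1} (bsc 0) (bsc 1) n {..<2 ^ n - 1} (\<lambda>_. False) = 0"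
proof (rule polar_block_err_eq_0)
  fix u ys
  assume u: "u \<in> polar_inputs n {..<2 ^ n - 1} (\<lambda>_. False)" and ys: "ys \<in> out_seqs {0, 1} (2 ^ n)"
    and "chanN (bsc 0) (polar_enc u) ys \<noteq> 0"
  moreover have lu: "length u = 2 ^ n"
    using u by (simp add: polar_inputs_def)
  ultimately have "ys = map of_bool (polar_enc u)"
    by (simp add: chanN_bsc_zero out_seqs_def)
  moreover have "sc_dec (bsc 1) n {..<2 ^ n - 1} (\<lambda>_. False) (map of_bool (polar_enc u)) (2 ^ n) = u"
    using u lu by (subst sc_dec_eq_take[of u n]) (auto simp: synth_bsc_one_polar_enc polar_inputs_def)
  ultimately show "sc_dec (bsc 1) n {..<2 ^ n - 1} (\<lambda>_. False) ys (2 ^ n) = u"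
    by simp
qed

lemma polar_achievable_le_1:
  assumes "polar_achievable Y W V R"
  shows "R \<le> 1"
proof -
  obtain A :: "nat \<Rightarrow> nat set" where A: "\<And>n. A n \<subseteq> {..<2 ^ n}"
    and rate: "\<forall>\<^sub>F n in sequentially. R \<le> real (card (A n)) / 2 ^ n"
    using assms unfolding polar_achievable_def by blast
  obtain n where "R \<le> real (card (A n)) / 2 ^ n"
    using rate by (auto simp: eventually_sequentially)
  moreover have "card (A n) \<le> 2 ^ n"
    using card_mono[OF _ A[of n]] by simp
  then have "real (card (A n)) / 2 ^ n \<le> 1"
    by (simp add: divide_le_eq_1)
  ultimately show ?thesis
    by linarith
qed

lemma le_polar_mm_capacity:
  "polar_achievable Y W V R \<Longrightarrow> R \<le> polar_mm_capacity Y W V"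
  unfolding polar_mm_capacity_def
  by (rule cSup_upper) (auto intro: bdd_aboveI[of _ 1] polar_achievable_le_1)

lemma mm_achievable_neg:
  assumes "R < 0"
  shows "mm_achievable Y W V R"
  unfolding mm_achievable_def
proof (intro allI impI always_eventually)
  fix \<epsilon> :: real and n :: nat
  assume "\<epsilon> > 0"
  then show "\<exists>M (c :: nat \<Rightarrow> bool list). 0 < M \<and> (\<forall>i<M. length (c i) = n) \<and>
      log 2 (real M) / real n > R \<and> (\<forall>i<M. mm_err Y W V n M c i < \<epsilon>)"
    using assms by (intro exI[of _ 1] exI[of _ "\<lambda>_. replicate n False"]) (simp add: mm_err_def)
qed

lemma mm_capacity_le:
  assumes "\<And>R. mm_achievable Y W V R \<Longrightarrow> R \<le> B"
  shows "mm_capacity Y W V \<le> B"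
  unfolding mm_capacity_def
  using mm_achievable_neg[of "-1" Y W V] by (intro cSup_least) (auto intro: assms)

lemma polar_achievable_bsc_zero_one: "polar_achievable {0, 1} (bsc 0) (bsc 1) (1 / 2)"
  unfolding polar_achievable_def
proof (intro exI conjI allI)
  show "(\<lambda>n. polar_block_err {0, 1} (bsc 0) (bsc 1) n {..<2 ^ n - 1} (\<lambda>_. False)) \<longlonglongrightarrow> 0"
    unfolding polar_block_err_bsc_zero_one by (rule tendsto_const)
  show "\<forall>\<^sub>F n in sequentially. 1 / 2 \<le> real (card {..<2 ^ n - 1 :: nat}) / 2 ^ n"
    unfolding eventually_sequentially
  proof (intro exI allI impI)
    fix n :: nat
    assume "1 \<le> n"
    then have "(2 :: real) \<le> 2 ^ n"
      using power_increasing[of 1 n "2 :: real"] by simp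
    then show "1 / 2 \<le> real (card {..<2 ^ n - 1 :: nat}) / 2 ^ n"
      by (simp add: of_nat_diff field_simps)
  qed
qed auto

text \<open>Under \<open>V = bsc 1\<close> the transmitted codeword has likelihood \<open>0\<close> at the noiseless output, so it can
  never be the strict maximiser once there is a competitor.\<close>

lemma mm_err_bsc_zero_one_ge_1:
  assumes n: "1 \<le> n" and M: "2 \<le> M" and c0: "length (c 0) = n"
  shows "1 \<le> mm_err {0, 1} (bsc 0) (bsc 1) n M c 0"
proof -
  define ys where "ys = (map of_bool (c 0) :: nat list)"
  have ys: "ys \<in> out_seqs {0, 1} n"
    using c0 by (auto simp: ys_def out_seqs_def)
  have sent: "chanN (bsc 0) (c 0) ys = 1"
    by (simp add: ys_def chanN_bsc_zero)
  have "ys \<noteq> map of_bool (map Not (c 0))"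
    using n c0 by (cases "c 0") (auto simp: ys_def)
  then have "chanN (bsc 1) (c 0) ys = 0"
    using c0 by (simp add: chanN_bsc_one chanN_bsc_zero ys_def)
  moreover have "0 \<le> chanN (bsc 1) (c 1) ys"
    by (simp add: chanN_nonneg bsc_nonneg)
  ultimately have decoded_wrongly: "\<not> (\<forall>j<M. j \<noteq> 0 \<longrightarrow> chanN (bsc 1) (c j) ys < chanN (bsc 1) (c 0) ys)"
    using M by (auto intro!: exI[of _ 1])
  have "chanN (bsc 0) (c 0) ys *
      (if \<forall>j<M. j \<noteq> 0 \<longrightarrow> chanN (bsc 1) (c j) ys < chanN (bsc 1) (c 0) ys then 0 else 1)
      \<le> mm_err {0, 1} (bsc 0) (bsc 1) n M c 0"
    unfolding mm_err_def
  proof (rule member_le_sum[OF ys])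
    show "finite (out_seqs {0, 1} n)"
      by (simp add: out_seqs_def finite_lists_length_eq)
  qed (simp add: chanN_nonneg bsc_nonneg)
  then show ?thesis
    by (simp only: sent decoded_wrongly if_False mult_1)
qed

lemma mm_achievable_bsc_zero_one_nonpos:
  assumes "mm_achievable {0, 1} (bsc 0) (bsc 1) R"
  shows "R \<le> 0"
proof (rule ccontr)
  assume "\<not> R \<le> 0"
  obtain N where N: "\<And>n. n \<ge> N \<Longrightarrow> \<exists>M (c :: nat \<Rightarrow> bool list). 0 < M \<and> (\<forall>i<M. length (c i) = n) \<and>
      log 2 (real M) / real n > R \<and> (\<forall>i<M. mm_err {0, 1} (bsc 0) (bsc 1) n M c i < 1)"
    using assms[unfolded mm_achievable_def, rule_format, of 1]
    unfolding eventually_sequentially by auto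
  define n where "n = max N 1"
  obtain M c where "0 < M" and len: "\<forall>i<M. length (c i) = n" and rate: "log 2 (real M) / real n > R"
    and err: "\<forall>i<M. mm_err {0, 1} (bsc 0) (bsc 1) n M c i < 1"
    using N[of n] by (auto simp: n_def)
  moreover have "M \<noteq> 1"
    using rate \<open>\<not> R \<le> 0\<close> by auto
  ultimately have "1 \<le> mm_err {0, 1} (bsc 0) (bsc 1) n M c 0"
    by (intro mm_err_bsc_zero_one_ge_1) (auto simp: n_def)
  with err \<open>0 < M\<close> show False
    by fastforce
qed

theorem mainTheorem2:
  shows "\<exists>(Y :: nat set) (W :: bool \<Rightarrow> nat \<Rightarrow> real) (V :: bool \<Rightarrow> nat \<Rightarrow> real).
           finite Y \<and> bdmc Y W \<and> bdmc Y V \<and> same_symmetrized Y W V \<and>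
           polar_mm_capacity Y W V > mm_capacity Y W V"
proof (intro exI conjI)
  show "finite {0 :: nat, 1}"
    by simp
  show "bdmc {0, 1} (bsc 0)" "bdmc {0, 1} (bsc 1)"
    by (rule bdmc_bsc; simp)+
  show "same_symmetrized {0, 1} (bsc 0) (bsc 1)"
    by (rule same_symmetrized_bsc)
  have "mm_capacity {0, 1} (bsc 0) (bsc 1) \<le> 0"
    by (rule mm_capacity_le) (rule mm_achievable_bsc_zero_one_nonpos)
  moreover have "1 / 2 \<le> polar_mm_capacity {0, 1} (bsc 0) (bsc 1)"
    by (rule le_polar_mm_capacity[OF polar_achievable_bsc_zero_one])
  ultimately show "polar_mm_capacity {0, 1} (bsc 0) (bsc 1) > mm_capacity {0, 1} (bsc 0) (bsc 1)"
    by linarith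
qed

end
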